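(* Let $(v_k)$ be a weakly null sequence in a Banach space $V$. Then for every $\varepsilon>0$ there exist integers $k_0<\dots<k_j$ and $\lambda_0,\dots,\lambda_j\ge0$ with $\sum_{i=0}^j\lambda_i=1$ such that $\max_{0\le i\le j}\lambda_i\le\varepsilon$ and $\max\{\|\sum_{i\in F}\lambda_iv_{k_i}\|: F\subseteq\{0,\dots,j\}\}\le\varepsilon$. *)

theory Defs
  imports "HOL-Analysis.Analysis"
begin

definition weakly_null :: "(nat \<Rightarrow> 'a::real_normed_vector) \<Rightarrow> bool" where
  "weakly_null v \<longleftrightarrow> (\<forall>f::'a \<Rightarrow> real. bounded_linear f \<longrightarrow> (\<lambda>k. f (v k)) \<longlonglongrightarrow> 0)"

end

theory Submission
  imports Defs
begin

text \<open>
  Both requirements say that \<open>comb c \<psi> \<le> \<epsilon>\<close> for all \<open>\<psi>\<close> in a family \<open>T\<close> of bounded null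
  sequences: the unit vectors, and the sequences \<open>[n \<in> A] f (v n)\<close> for norm-one functionals
  \<open>f\<close> (which reach the norm of each partial sum by Hahn-Banach).  The heart of the proof is
  a Simons-type lemma: if for every sequence of convex blocks \<open>cs i\<close> (supported beyond
  \<open>i\<close>) the dyadic average \<open>\<Sum>i. 2\<^sup>-\<^sup>i\<^sup>-\<^sup>1 comb (cs i) \<psi>\<close> attains its maximum on \<open>T\<close>, then
  \<open>sup\<^sub>\<psi> comb c \<psi>\<close> can be made arbitrarily small.  It is proved by choosing the blocks
  greedily, so that the suprema of the partial mixtures are almost minimal, and by
  comparing them with a maximiser \<open>\<phi> \<in> T\<close>, which is a null sequence.
\<close>

section \<open>A norming functional from the Hahn-Banach argument\<close>

text \<open>Graphs of linear functionals on subspaces that are dominated by the norm and take the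
  value \<open>\<parallel>w\<parallel>\<close> at \<open>w\<close>; a maximal one is the graph of the desired functional.\<close>
definition dominated_graph :: "'a::real_normed_vector \<Rightarrow> ('a \<times> real) set \<Rightarrow> bool" where
  "dominated_graph w G \<longleftrightarrow>
     subspace G \<and> single_valued G \<and> (w, norm w) \<in> G \<and> (\<forall>(x, a)\<in>G. a \<le> norm x)"

lemma dominated_graph_line: "dominated_graph w (span {(w, norm w)})"
proof -
  have line: "span {(w, norm w)} = range (\<lambda>t. (t *\<^sub>R w, t * norm w))"
    by (auto simp: span_singleton)
  have "t * norm w \<le> \<bar>t\<bar> * norm w" for t
    by (intro mult_right_mono) auto
  then show ?thesis
    unfolding dominated_graph_def
    by (auto simp: line[symmetric] span_base single_valued_def)
      (auto simp: line single_valued_def split: if_splits)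
qed

lemma dominated_graph_chain:
  assumes "C \<in> chains {G. dominated_graph w G}" "C \<noteq> {}"
  shows "dominated_graph w (\<Union>C)"
proof -
  have good: "\<And>G. G \<in> C \<Longrightarrow> dominated_graph w G"
    and chain: "\<And>G H. G \<in> C \<Longrightarrow> H \<in> C \<Longrightarrow> G \<subseteq> H \<or> H \<subseteq> G"
    using assms(1) unfolding chains_def chain_subset_def by auto
  have common: "\<exists>G\<in>C. p \<in> G \<and> q \<in> G" if "p \<in> \<Union>C" "q \<in> \<Union>C" for p q
    using that chain by blast
  show ?thesis
    unfolding dominated_graph_def subspace_def single_valued_def
  proof (intro conjI allI impI ballI)
    obtain G where G: "G \<in> C" using assms(2) by blast
    then show "(w, norm w) \<in> \<Union>C" "0 \<in> \<Union>C"
      using good[OF G] unfolding dominated_graph_def subspace_def by blast+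
  next
    fix p q assume "p \<in> \<Union>C" "q \<in> \<Union>C"
    then obtain G where "G \<in> C" "p \<in> G" "q \<in> G" using common by blast
    then show "p + q \<in> \<Union>C"
      using good unfolding dominated_graph_def subspace_def by blast
  next
    fix c p assume "p \<in> \<Union>C"
    then obtain G where "G \<in> C" "p \<in> G" by blast
    then show "c *\<^sub>R p \<in> \<Union>C"
      using good unfolding dominated_graph_def subspace_def by blast
  next
    fix x a b assume "(x, a) \<in> \<Union>C" "(x, b) \<in> \<Union>C"
    then obtain G where "G \<in> C" "(x, a) \<in> G" "(x, b) \<in> G" using common by blast
    then show "a = b"
      using good unfolding dominated_graph_def single_valued_def by blast
  next
    fix p assume "p \<in> \<Union>C"
    then obtain G where "G \<in> C" "p \<in> G" by blast
    then show "case p of (x, a) \<Rightarrow> a \<le> norm x"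
      using good unfolding dominated_graph_def by blast
  qed
qed

text \<open>A value \<open>c\<close> for a new vector \<open>x\<close> exists because
  \<open>a - \<parallel>y - x\<parallel> \<le> \<parallel>z + x\<parallel> - b\<close> for all graph points \<open>(y, a)\<close>, \<open>(z, b)\<close>.\<close>
lemma extension_value:
  assumes "dominated_graph w M"
  obtains c where "\<And>y a. (y, a) \<in> M \<Longrightarrow> a - norm (y - x) \<le> c"
    and "\<And>z b. (z, b) \<in> M \<Longrightarrow> c \<le> norm (z + x) - b"
proof -
  have sub: "subspace M" and bound: "\<And>y a. (y, a) \<in> M \<Longrightarrow> a \<le> norm y"
    using assms unfolding dominated_graph_def by auto
  have sep: "a - norm (y - x) \<le> norm (z + x) - b" if "(y, a) \<in> M" "(z, b) \<in> M" for y a z b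
  proof -
    have "(y + z, a + b) \<in> M" using subspace_add[OF sub that] by simp
    then have "a + b \<le> norm (y + z)" by (rule bound)
    also have "\<dots> \<le> norm (y - x) + norm (z + x)"
      using norm_triangle_ineq[of "y - x" "z + x"] by simp
    finally show ?thesis by simp
  qed
  define S where "S = {a - norm (y - x) | y a. (y, a) \<in> M}"
  have zero: "(0, 0) \<in> M" using subspace_0[OF sub] by (simp add: zero_prod_def)
  then have "S \<noteq> {}" unfolding S_def by blast
  moreover have "bdd_above S"
    unfolding S_def bdd_above_def using sep[OF _ zero] by blast
  ultimately show ?thesis
    using sep by (intro that[of "Sup S"]) (auto simp: S_def intro!: cSup_upper cSup_least)
qed

lemma extension_bound:
  assumes sub: "subspace M" and bound: "\<And>y a. (y, a) \<in> M \<Longrightarrow> a \<le> norm y"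
    and lower: "\<And>y a. (y, a) \<in> M \<Longrightarrow> a - norm (y - x) \<le> c"
    and upper: "\<And>z b. (z, b) \<in> M \<Longrightarrow> c \<le> norm (z + x) - b"
    and t: "(p - t *\<^sub>R x, a - t * c) \<in> M"
  shows "a \<le> norm p"
proof -
  consider "t = 0" | "t > 0" | "t < 0" by linarith
  then show ?thesis
  proof cases
    case 1 then show ?thesis using bound[OF t] by simp
  next
    case 2
    have "(p /\<^sub>R t - x, (a - t * c) / t) \<in> M"
      using subspace_scale[OF sub t, of "1 / t"] 2 by (simp add: field_simps)
    from upper[OF this] have "c \<le> norm (p /\<^sub>R t) - (a - t * c) / t" by simp
    then show ?thesis using 2 by (simp add: field_simps)
  next
    case 3
    have "(x - p /\<^sub>R t, - ((a - t * c) / t)) \<in> M"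
      using subspace_scale[OF sub t, of "- 1 / t"] 3 by (simp add: field_simps)
    from lower[OF this] have "- ((a - t * c) / t) - norm (- (p /\<^sub>R t)) \<le> c" by simp
    then show ?thesis using 3 by (simp add: field_simps)
  qed
qed

lemma dominated_graph_extend:
  assumes good: "dominated_graph w M" and new: "x \<notin> Domain M"
  shows "\<exists>M'. dominated_graph w M' \<and> M \<subset> M'"
proof -
  have sub: "subspace M" and sv: "single_valued M" and bound: "\<And>y a. (y, a) \<in> M \<Longrightarrow> a \<le> norm y"
    using good unfolding dominated_graph_def by auto
  obtain c where lower: "\<And>y a. (y, a) \<in> M \<Longrightarrow> a - norm (y - x) \<le> c"
    and upper: "\<And>z b. (z, b) \<in> M \<Longrightarrow> c \<le> norm (z + x) - b"
    using extension_value[OF good] by blast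
  define M' where "M' = span (insert (x, c) M)"
  have M'_iff: "p \<in> M' \<longleftrightarrow> (\<exists>t. p - t *\<^sub>R (x, c) \<in> M)" for p
    unfolding M'_def span_insert span_eq_iff[THEN iffD2, OF sub] by simp
  have sub': "subspace M'" unfolding M'_def by (rule subspace_span)
  have "M \<subseteq> M'" unfolding M'_def using span_superset by blast
  moreover have "(x, c) \<in> M'" unfolding M'_def by (rule span_base) simp
  ultimately have proper: "M \<subset> M'" using new by auto
  have sv': "single_valued M'"
  proof (rule single_valuedI)
    fix p a b assume "(p, a) \<in> M'" "(p, b) \<in> M'"
    then have "(0, a - b) \<in> M'" using subspace_diff[OF sub'] by fastforce
    then obtain t where "(0, a - b) - t *\<^sub>R (x, c) \<in> M" unfolding M'_iff by blast
    then have t: "(- t *\<^sub>R x, a - b - t * c) \<in> M" by simp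
    have "t = 0"
    proof (rule ccontr)
      assume "t \<noteq> 0"
      then have "x \<in> Domain M"
        using subspace_scale[OF sub t, of "- 1 / t"] by (auto simp: Domain_iff)
      then show False using new by blast
    qed
    then have "(0, a - b) \<in> M" using t by simp
    moreover have "(0, 0) \<in> M" using subspace_0[OF sub] by (simp add: zero_prod_def)
    ultimately show "a = b" using single_valuedD[OF sv] by fastforce
  qed
  have bound': "a \<le> norm p" if pa: "(p, a) \<in> M'" for p a
  proof -
    obtain t where "(p, a) - t *\<^sub>R (x, c) \<in> M" using pa unfolding M'_iff by blast
    then have "(p - t *\<^sub>R x, a - t * c) \<in> M" by simp
    with sub bound lower upper show ?thesis by (rule extension_bound)
  qed
  have "(w, norm w) \<in> M'" using good \<open>M \<subseteq> M'\<close> unfolding dominated_graph_def by blast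
  then have "dominated_graph w M'"
    unfolding dominated_graph_def using sub' sv' bound' by blast
  then show ?thesis using proper by blast
qed

theorem norming_functional:
  fixes w :: "'a::real_normed_vector"
  obtains f where "bounded_linear f" "\<And>x. \<bar>f x\<bar> \<le> norm x" "f w = norm w"
proof -
  obtain M where good: "dominated_graph w M"
    and maximal: "\<And>G. dominated_graph w G \<Longrightarrow> M \<subseteq> G \<Longrightarrow> G = M"
  proof -
    have "\<exists>U\<in>{G. dominated_graph w G}. \<forall>G\<in>C. G \<subseteq> U"
      if "C \<in> chains {G. dominated_graph w G}" for C
      using dominated_graph_chain[OF that] dominated_graph_line by (cases "C = {}") auto
    then show ?thesis
      using Zorn_Lemma2[of "{G. dominated_graph w G}"] that by auto
  qed
  have sub: "subspace M" and sv: "single_valued M" and w: "(w, norm w) \<in> M"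
    and bound: "\<And>x a. (x, a) \<in> M \<Longrightarrow> a \<le> norm x"
    using good unfolding dominated_graph_def by auto
  have total: "x \<in> Domain M" for x
    using dominated_graph_extend[OF good, of x] maximal by blast
  define f where "f x = (THE a. (x, a) \<in> M)" for x
  have graph: "(x, a) \<in> M \<longleftrightarrow> a = f x" for x a
  proof -
    obtain b where "(x, b) \<in> M" using total by blast
    then have "f x = b" unfolding f_def using single_valuedD[OF sv] by blast
    then show ?thesis using \<open>(x, b) \<in> M\<close> single_valuedD[OF sv] by blast
  qed
  have add: "f (x + y) = f x + f y" for x y
    using subspace_add[OF sub, of "(x, f x)" "(y, f y)"] graph by simp
  have scale: "f (r *\<^sub>R x) = r * f x" for r x
    using subspace_scale[OF sub, of "(x, f x)" r] graph by simp
  have abs_le: "\<bar>f x\<bar> \<le> norm x" for x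
    using bound[of x "f x"] bound[of "- x" "f (- x)"] scale[of "- 1" x] graph by auto
  have "bounded_linear f"
    by (rule bounded_linear_intro[where K = 1]) (use add scale abs_le in auto)
  moreover have "f w = norm w" using w unfolding graph by simp
  ultimately show ?thesis using that abs_le by blast
qed

section \<open>Weakly null sequences are bounded\<close>

lemma functional_series:
  fixes \<phi> :: "nat \<Rightarrow> 'a::real_normed_vector \<Rightarrow> real"
  assumes bl: "\<And>i. bounded_linear (\<phi> i)" and norm1: "\<And>i x. \<bar>\<phi> i x\<bar> \<le> norm x"
    and a: "summable a" "\<And>i. a i \<ge> 0"
  shows "summable (\<lambda>i. a i * \<phi> i x)"
    and "\<bar>\<Sum>i. a i * \<phi> i x\<bar> \<le> (\<Sum>i. a i) * norm x"
    and "bounded_linear (\<lambda>x. \<Sum>i. a i * \<phi> i x)"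
proof -
  have dom: "norm (a i * \<phi> i y) \<le> a i * norm y" for i y
    using norm1[of i y] a(2)[of i] by (simp add: abs_mult mult_left_mono)
  have sum: "summable (\<lambda>i. a i * \<phi> i y)" for y
    by (rule summable_comparison_test[OF _ summable_mult2[OF a(1), of "norm y"]]) (use dom in blast)
  show "summable (\<lambda>i. a i * \<phi> i x)" by (rule sum)
  have bound: "\<bar>\<Sum>i. a i * \<phi> i y\<bar> \<le> (\<Sum>i. a i) * norm y" for y
    using norm_suminf_le[OF dom summable_mult2[OF a(1)]] suminf_mult2[OF a(1), of "norm y"] by simp
  then show "\<bar>\<Sum>i. a i * \<phi> i x\<bar> \<le> (\<Sum>i. a i) * norm x" .
  have lin: "linear (\<phi> i)" for i using bl by (rule bounded_linear.linear)
  show "bounded_linear (\<lambda>x. \<Sum>i. a i * \<phi> i x)"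
  proof (rule bounded_linear_intro[where K = "\<Sum>i. a i"])
    fix x y show "(\<Sum>i. a i * \<phi> i (x + y)) = (\<Sum>i. a i * \<phi> i x) + (\<Sum>i. a i * \<phi> i y)"
      using suminf_add[OF sum sum] linear_add[OF lin] by (simp add: distrib_left)
  next
    fix r x show "(\<Sum>i. a i * \<phi> i (r *\<^sub>R x)) = r *\<^sub>R (\<Sum>i. a i * \<phi> i x)"
      using suminf_mult[OF sum, of r] linear_scale[OF lin] by (simp add: algebra_simps)
  next
    fix x show "norm (\<Sum>i. a i * \<phi> i x) \<le> norm x * (\<Sum>i. a i)"
      using bound[of x] by (simp add: mult.commute)
  qed
qed

lemma weakly_nullD:
  fixes f :: "'a::real_normed_vector \<Rightarrow> real"
  shows "weakly_null v \<Longrightarrow> bounded_linear f \<Longrightarrow> (\<lambda>k. f (v k)) \<longlonglongrightarrow> 0"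
  unfolding weakly_null_def by blast

lemma unbounded_weakly_null_hump:
  fixes v :: "nat \<Rightarrow> 'a::real_normed_vector" and g :: "'a \<Rightarrow> real"
  assumes "weakly_null v" "\<not> bounded (range v)" "bounded_linear g"
  obtains n where "n \<ge> j" "norm (v n) \<ge> B" "\<bar>g (v n)\<bar> \<le> 1"
proof -
  obtain N where small: "\<And>n. n \<ge> N \<Longrightarrow> \<bar>g (v n)\<bar> < 1"
    using LIMSEQ_D[OF weakly_nullD[OF assms(1,3)], of 1] by fastforce
  have "\<exists>n\<ge>max N j. norm (v n) > B"
  proof (rule ccontr)
    assume "\<not> ?thesis"
    then have "v m \<in> v ` {..<max N j} \<union> cball 0 B" for m
      by (cases "m < max N j") (auto simp: not_less)
    then have "range v \<subseteq> v ` {..<max N j} \<union> cball 0 B" by blast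
    moreover have "bounded (v ` {..<max N j} \<union> cball 0 B)" by (simp add: finite_imp_bounded)
    ultimately show False using assms(2) bounded_subset by blast
  qed
  then show ?thesis using that small by force
qed

text \<open>The gliding hump estimate: in \<open>\<Sum>i. 3\<^sup>-\<^sup>i \<phi>\<^sub>i\<close>, the \<open>j\<close>-th term dominates at a large vector
  normed by \<open>\<phi>\<^sub>j\<close> on which the earlier terms are small.\<close>
lemma gliding_hump_value:
  fixes \<phi> :: "nat \<Rightarrow> 'a::real_normed_vector \<Rightarrow> real"
  assumes bl: "\<And>i. bounded_linear (\<phi> i)" and norm1: "\<And>i x. \<bar>\<phi> i x\<bar> \<le> norm x"
    and peak: "\<phi> j y = norm y" and large: "norm y \<ge> 4 * 3 ^ j"
    and head: "\<bar>\<Sum>i<j. (1/3) ^ i * \<phi> i y\<bar> \<le> 1"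
  shows "(\<Sum>i. (1/3) ^ i * \<phi> i y) \<ge> 1"
proof -
  define a :: "nat \<Rightarrow> real" where "a i = (1/3) ^ i" for i
  have a: "summable a" "\<And>i. a i \<ge> 0" unfolding a_def by simp_all
  have tail_weights: "(\<Sum>i. a (i + Suc j)) = a j / 2"
    using suminf_mult[of "\<lambda>i. (1/3::real) ^ i" "(1/3) ^ Suc j"] suminf_geometric[of "1/3::real"]
    by (simp add: a_def power_add mult.commute)
  have tail: "\<bar>\<Sum>i. a (i + Suc j) * \<phi> (i + Suc j) y\<bar> \<le> a j / 2 * norm y"
    using functional_series(2)[where \<phi> = "\<lambda>i. \<phi> (i + Suc j)" and a = "\<lambda>i. a (i + Suc j)",
        OF bl norm1 summable_ignore_initial_segment[OF a(1)] a(2), of y]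
    unfolding tail_weights .
  have "(\<Sum>i. a i * \<phi> i y) = (\<Sum>i<Suc j. a i * \<phi> i y) + (\<Sum>i. a (i + Suc j) * \<phi> (i + Suc j) y)"
    using suminf_split_initial_segment[OF functional_series(1)[where \<phi> = \<phi> and x = y, OF bl norm1 a],
        of "Suc j"] by simp
  also have "(\<Sum>i<Suc j. a i * \<phi> i y) = (\<Sum>i<j. a i * \<phi> i y) + a j * norm y"
    using peak by simp
  finally have "(\<Sum>i. a i * \<phi> i y) \<ge> (\<Sum>i<j. a i * \<phi> i y) + a j / 2 * norm y"
    using tail by linarith
  moreover have "a j * norm y \<ge> 4"
  proof -
    have "a j * (4 * 3 ^ j) = 4" by (simp add: a_def power_one_over)
    moreover have "a j * (4 * 3 ^ j) \<le> a j * norm y"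
      using large by (intro mult_left_mono) (simp_all add: a_def)
    ultimately show ?thesis by simp
  qed
  ultimately show ?thesis using head unfolding a_def by linarith
qed

text \<open>If \<open>v\<close> were unbounded, choosing humps recursively would give a bounded functional
  that is at least one on a subsequence of \<open>v\<close>.\<close>
theorem weakly_null_bounded:
  fixes v :: "nat \<Rightarrow> 'a::real_normed_vector"
  assumes wn: "weakly_null v"
  shows "bounded (range v)"
proof (rule ccontr)
  assume unbounded: "\<not> bounded (range v)"
  have "\<forall>j (g :: 'a \<Rightarrow> real). \<exists>m. bounded_linear g \<longrightarrow>
      m \<ge> j \<and> norm (v m) \<ge> 4 * 3 ^ j \<and> \<bar>g (v m)\<bar> \<le> 1"
    using unbounded_weakly_null_hump[OF wn unbounded] by metis
  then obtain pick :: "nat \<Rightarrow> ('a \<Rightarrow> real) \<Rightarrow> nat" where pick: "\<And>j g. bounded_linear g \<Longrightarrow>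
      pick j g \<ge> j \<and> norm (v (pick j g)) \<ge> 4 * 3 ^ j \<and> \<bar>g (v (pick j g))\<bar> \<le> 1"
    by metis
  obtain nf :: "'a \<Rightarrow> 'a \<Rightarrow> real" where nf: "\<And>w. bounded_linear (nf w)"
    "\<And>w x. \<bar>nf w x\<bar> \<le> norm x" "\<And>w. nf w w = norm w"
    using norming_functional by metis
  define g where "g = rec_nat (\<lambda>_. 0) (\<lambda>j gj x. gj x + (1/3) ^ j * nf (v (pick j gj)) x)"
  define n where "n j = pick j (g j)" for j
  define \<phi> where "\<phi> j = nf (v (n j))" for j
  have g_sum: "g j x = (\<Sum>i<j. (1/3) ^ i * \<phi> i x)" for j x
    by (induction j) (simp_all add: g_def \<phi>_def n_def)
  have g_bl: "bounded_linear (g j)" for j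
    unfolding g_sum[abs_def]
    by (intro bounded_linear_sum bounded_linear_const_mult) (simp add: \<phi>_def nf)
  have hump: "n j \<ge> j" "norm (v (n j)) \<ge> 4 * 3 ^ j" "\<bar>g j (v (n j))\<bar> \<le> 1" for j
    unfolding n_def using pick[OF g_bl] by auto
  have \<phi>_bl: "bounded_linear (\<phi> i)" and \<phi>_le: "\<bar>\<phi> i x\<bar> \<le> norm x" for i x
    unfolding \<phi>_def using nf by auto
  define f where "f x = (\<Sum>i. (1/3) ^ i * \<phi> i x)" for x
  have f_bl: "bounded_linear f"
    unfolding f_def[abs_def] by (rule functional_series(3)[where \<phi> = \<phi>, OF \<phi>_bl \<phi>_le]) simp_all
  have large: "f (v (n j)) \<ge> 1" for j
    unfolding f_def
    by (rule gliding_hump_value[OF \<phi>_bl \<phi>_le _ hump(2)]) (use hump(3) nf(3) in \<open>simp_all add: \<phi>_def g_sum\<close>)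
  obtain N where "\<And>m. m \<ge> N \<Longrightarrow> \<bar>f (v m)\<bar> < 1"
    using LIMSEQ_D[OF weakly_nullD[OF wn f_bl], of 1] by fastforce
  then have "\<bar>f (v (n N))\<bar> < 1" using hump(1)[of N] .
  then show False using large[of N] by linarith
qed

section \<open>Finitely supported combinations and convex blocks\<close>

definition fin_supp :: "(nat \<Rightarrow> real) \<Rightarrow> bool" where
  "fin_supp c \<longleftrightarrow> (\<exists>N. \<forall>n\<ge>N. c n = 0)"

definition comb :: "(nat \<Rightarrow> real) \<Rightarrow> (nat \<Rightarrow> 'a::real_normed_vector) \<Rightarrow> 'a" where
  "comb c x = (\<Sum>n. c n *\<^sub>R x n)"

lemma comb_eq_sum: "\<forall>n\<ge>N. c n = 0 \<Longrightarrow> comb c x = (\<Sum>n<N. c n *\<^sub>R x n)"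
  unfolding comb_def by (rule suminf_finite) auto

lemma fin_supp_summable:
  fixes x :: "nat \<Rightarrow> 'a::real_normed_vector"
  assumes "fin_supp c" shows "summable (\<lambda>n. c n *\<^sub>R x n)"
proof -
  obtain N where "\<forall>n\<ge>N. c n = 0" using assms unfolding fin_supp_def by blast
  then show ?thesis by (intro summable_finite[of "{..<N}"]) auto
qed

lemma fin_supp_add:
  assumes "fin_supp c" "fin_supp d" shows "fin_supp (\<lambda>n. c n + d n)"
proof -
  obtain M N where "\<forall>n\<ge>M. c n = 0" "\<forall>n\<ge>N. d n = 0" using assms unfolding fin_supp_def by blast
  then show ?thesis unfolding fin_supp_def by (intro exI[of _ "max M N"]) simp
qed

lemma fin_supp_scale: "fin_supp c \<Longrightarrow> fin_supp (\<lambda>n. r * c n)"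
  unfolding fin_supp_def by auto

lemma fin_supp_sum: "finite I \<Longrightarrow> (\<And>i. i \<in> I \<Longrightarrow> fin_supp (c i)) \<Longrightarrow> fin_supp (\<lambda>n. \<Sum>i\<in>I. c i n)"
  by (induction I rule: finite_induct) (auto intro: fin_supp_add simp: fin_supp_def[of "\<lambda>_. 0"])

lemma fin_supp_uniform:
  fixes I :: nat
  assumes "\<And>i. i < I \<Longrightarrow> fin_supp (c i)"
  shows "\<exists>N. \<forall>i<I. \<forall>n\<ge>N. c i n = 0"
  using assms
proof (induction I)
  case (Suc I)
  obtain N where N: "\<forall>i<I. \<forall>n\<ge>N. c i n = 0" using Suc by auto
  obtain N' where N': "\<forall>n\<ge>N'. c I n = 0" using Suc.prems[of I] unfolding fin_supp_def by auto
  have "\<forall>i<Suc I. \<forall>n\<ge>max N N'. c i n = 0"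
    using N N' by (auto simp: less_Suc_eq)
  then show ?case by blast
qed simp

lemma comb_add:
  "fin_supp c \<Longrightarrow> fin_supp d \<Longrightarrow> comb (\<lambda>n. c n + d n) x = comb c x + comb d x"
  unfolding comb_def using suminf_add[OF fin_supp_summable[of c x] fin_supp_summable[of d x]]
  by (simp add: scaleR_add_left)

lemma comb_scale: "fin_supp c \<Longrightarrow> comb (\<lambda>n. r * c n) x = r *\<^sub>R comb c x"
  unfolding comb_def using suminf_scaleR_right[OF fin_supp_summable[of c x], where r = r] by simp

lemma comb_sum:
  "finite I \<Longrightarrow> (\<And>i. i \<in> I \<Longrightarrow> fin_supp (c i)) \<Longrightarrow>
    comb (\<lambda>n. \<Sum>i\<in>I. c i n) x = (\<Sum>i\<in>I. comb (c i) x)"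
proof (induction I rule: finite_induct)
  case empty then show ?case by (simp add: comb_def)
next
  case (insert j I)
  have "comb (\<lambda>n. \<Sum>i\<in>insert j I. c i n) x = comb (\<lambda>n. c j n + (\<Sum>i\<in>I. c i n)) x"
    using insert(1,2) by simp
  also have "\<dots> = comb (c j) x + comb (\<lambda>n. \<Sum>i\<in>I. c i n) x"
    using insert(1,4) by (simp add: comb_add fin_supp_sum)
  also have "\<dots> = comb (c j) x + (\<Sum>i\<in>I. comb (c i) x)"
    using insert(3,4) by simp
  finally show ?case using insert(1,2) by simp
qed

lemma comb_linear:
  assumes "linear f" "fin_supp c"
  shows "f (comb c x) = comb c (\<lambda>n. f (x n))"
proof -
  obtain N where N: "\<forall>n\<ge>N. c n = 0" using assms(2) unfolding fin_supp_def by blast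
  show ?thesis
    using assms(1) by (simp add: comb_eq_sum[OF N] linear_sum linear_scale)
qed

lemma comb_delta: "comb c (\<lambda>n. if n = m then 1 else 0 :: real) = c m"
proof -
  have "comb c (\<lambda>n. if n = m then 1 else 0 :: real) = (\<Sum>n\<in>{m}. c n * (if n = m then 1 else 0))"
    unfolding comb_def real_scaleR_def by (rule suminf_finite) auto
  then show ?thesis by simp
qed

definition conv_block :: "nat \<Rightarrow> (nat \<Rightarrow> real) set" where
  "conv_block k = {c. (\<forall>n. 0 \<le> c n) \<and> (\<forall>n<k. c n = 0) \<and> fin_supp c \<and> comb c (\<lambda>_. 1 :: real) = 1}"

lemma conv_blockD:
  assumes "c \<in> conv_block k"
  shows "fin_supp c" "0 \<le> c n" "n < k \<Longrightarrow> c n = 0" "comb c (\<lambda>_. 1 :: real) = 1"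
  using assms unfolding conv_block_def by auto

lemma conv_block_comb_mono:
  fixes \<psi> \<phi> :: "nat \<Rightarrow> real"
  assumes c: "c \<in> conv_block k" and le: "\<And>n. n \<ge> k \<Longrightarrow> \<psi> n \<le> \<phi> n"
  shows "comb c \<psi> \<le> comb c \<phi>"
proof -
  obtain N where N: "\<forall>n\<ge>N. c n = 0"
    using conv_blockD(1)[OF c] unfolding fin_supp_def by blast
  have "c n * \<psi> n \<le> c n * \<phi> n" for n
    using le[of n] conv_blockD(2,3)[OF c, of n] by (cases "n < k") (auto intro: mult_left_mono)
  then show ?thesis unfolding comb_eq_sum[OF N] by (intro sum_mono) simp
qed

lemma conv_block_comb_const:
  fixes \<theta> :: real
  assumes "c \<in> conv_block k" shows "comb c (\<lambda>_. \<theta>) = \<theta>"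
proof -
  have "comb c (\<lambda>_. \<theta>) = comb (\<lambda>n. \<theta> * c n) (\<lambda>_. 1 :: real)"
    unfolding comb_def by (simp add: mult.commute)
  also have "\<dots> = \<theta> * comb c (\<lambda>_. 1 :: real)"
    unfolding comb_scale[OF conv_blockD(1)[OF assms]] by simp
  also have "\<dots> = \<theta>" using conv_blockD(4)[OF assms] by simp
  finally show ?thesis .
qed

lemma conv_block_le:
  fixes \<psi> :: "nat \<Rightarrow> real"
  assumes c: "c \<in> conv_block k" and "\<And>n. n \<ge> k \<Longrightarrow> \<psi> n \<le> \<theta>"
  shows "comb c \<psi> \<le> \<theta>"
  using conv_block_comb_mono[OF c, of \<psi> "\<lambda>_. \<theta>"] assms(2) conv_block_comb_const[OF c] by simp

lemma conv_block_ge: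
  fixes \<psi> :: "nat \<Rightarrow> real"
  assumes c: "c \<in> conv_block k" and "\<And>n. n \<ge> k \<Longrightarrow> \<theta> \<le> \<psi> n"
  shows "\<theta> \<le> comb c \<psi>"
  using conv_block_comb_mono[OF c, of "\<lambda>_. \<theta>" \<psi>] assms(2) conv_block_comb_const[OF c] by simp

lemma conv_block_comb_abs:
  fixes \<psi> :: "nat \<Rightarrow> real"
  assumes c: "c \<in> conv_block k" and "\<And>n. \<bar>\<psi> n\<bar> \<le> M"
  shows "\<bar>comb c \<psi>\<bar> \<le> M"
proof -
  have "- M \<le> \<psi> n \<and> \<psi> n \<le> M" for n using assms(2)[of n] by linarith
  then have "comb c \<psi> \<le> M" "- M \<le> comb c \<psi>"
    using conv_block_le[OF c] conv_block_ge[OF c] by blast+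
  then show ?thesis by simp
qed

lemma conv_block_norm:
  fixes x :: "nat \<Rightarrow> 'a::real_normed_vector"
  assumes c: "c \<in> conv_block k" and bound: "\<And>n. norm (x n) \<le> M"
  shows "norm (comb c x) \<le> M"
proof -
  obtain N where N: "\<forall>n\<ge>N. c n = 0"
    using conv_blockD(1)[OF c] unfolding fin_supp_def by blast
  have "norm (comb c x) \<le> (\<Sum>n<N. norm (c n *\<^sub>R x n))"
    unfolding comb_eq_sum[OF N] by (rule norm_sum)
  also have "\<dots> = (\<Sum>n<N. c n * norm (x n))"
    using conv_blockD(2)[OF c] by simp
  also have "\<dots> = comb c (\<lambda>n. norm (x n))" unfolding comb_eq_sum[OF N] by simp
  also have "\<dots> \<le> M" by (rule conv_block_le[OF c]) (rule bound)
  finally show ?thesis .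
qed

lemma conv_block_mono: "c \<in> conv_block k \<Longrightarrow> j \<le> k \<Longrightarrow> c \<in> conv_block j"
  unfolding conv_block_def by auto

lemma conv_block_convex:
  assumes "finite I" "\<And>i. i \<in> I \<Longrightarrow> c i \<in> conv_block k"
    and "\<And>i. i \<in> I \<Longrightarrow> 0 \<le> t i" "(\<Sum>i\<in>I. t i) = 1"
  shows "(\<lambda>n. \<Sum>i\<in>I. t i * c i n) \<in> conv_block k"
proof -
  have supp: "fin_supp (\<lambda>n. t i * c i n)" if "i \<in> I" for i
    using fin_supp_scale conv_blockD(1)[OF assms(2)[OF that]] by blast
  have "comb (\<lambda>n. \<Sum>i\<in>I. t i * c i n) (\<lambda>_. 1 :: real) = (\<Sum>i\<in>I. comb (\<lambda>n. t i * c i n) (\<lambda>_. 1 :: real))"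
    by (rule comb_sum[OF assms(1) supp])
  also have "\<dots> = (\<Sum>i\<in>I. t i)"
    using comb_scale[OF conv_blockD(1)[OF assms(2)], where x = "\<lambda>_. 1 :: real"]
      conv_blockD(4)[OF assms(2)] by (intro sum.cong) auto
  finally have "comb (\<lambda>n. \<Sum>i\<in>I. t i * c i n) (\<lambda>_. 1 :: real) = 1" using assms(4) by simp
  moreover have "0 \<le> (\<Sum>i\<in>I. t i * c i n)" for n
    using assms(3) conv_blockD(2)[OF assms(2)] by (intro sum_nonneg) simp
  moreover have "(\<Sum>i\<in>I. t i * c i n) = 0" if "n < k" for n
    using conv_blockD(3)[OF assms(2) that] by simp
  moreover have "fin_supp (\<lambda>n. \<Sum>i\<in>I. t i * c i n)"
    by (rule fin_supp_sum[OF assms(1) supp])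
  ultimately show ?thesis unfolding conv_block_def by blast
qed

lemma conv_block_delta: "(\<lambda>n. if n = k then 1 else 0) \<in> conv_block k"
  unfolding conv_block_def fin_supp_def by (auto simp: comb_eq_sum[of "Suc k"] intro: exI[of _ "Suc k"])

lemma conv_block_le1:
  assumes "c \<in> conv_block k" shows "c n \<le> 1"
proof -
  have "comb c (\<lambda>m. if m = n then 1 else 0 :: real) \<le> 1" by (rule conv_block_le[OF assms]) simp
  then show ?thesis by (simp add: comb_delta)
qed

lemma conv_blocks_null:
  fixes \<phi> :: "nat \<Rightarrow> real"
  assumes cs: "\<And>i. cs i \<in> conv_block i" and "\<phi> \<longlonglongrightarrow> 0"
  shows "(\<lambda>i. comb (cs i) \<phi>) \<longlonglongrightarrow> 0"
proof (rule LIMSEQ_I)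
  fix \<theta> :: real assume "\<theta> > 0"
  then obtain K where K: "\<And>n. n \<ge> K \<Longrightarrow> \<bar>\<phi> n\<bar> < \<theta> / 2"
    using LIMSEQ_D[OF assms(2), of "\<theta> / 2"] by fastforce
  have "\<bar>comb (cs i) \<phi>\<bar> \<le> \<theta> / 2" if "i \<ge> K" for i
  proof -
    have "- (\<theta> / 2) \<le> \<phi> n \<and> \<phi> n \<le> \<theta> / 2" if "n \<ge> i" for n
      using K[of n] that \<open>i \<ge> K\<close> by auto
    then have "comb (cs i) \<phi> \<le> \<theta> / 2" "- (\<theta> / 2) \<le> comb (cs i) \<phi>"
      using conv_block_le[OF cs] conv_block_ge[OF cs] by blast+
    then show ?thesis by simp
  qed
  then show "\<exists>K. \<forall>i\<ge>K. norm (comb (cs i) \<phi> - 0) < \<theta>"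
    using \<open>\<theta> > 0\<close> by force
qed

section \<open>Dyadic averages\<close>

definition dyadic_avg :: "(nat \<Rightarrow> 'a::real_normed_vector) \<Rightarrow> 'a" where
  "dyadic_avg p = (\<Sum>i. (1/2) ^ Suc i *\<^sub>R p i)"

lemma dyadic_weights: "(\<Sum>i<k. (1/2::real) ^ Suc i) + (1/2) ^ k = 1"
  by (induction k) (simp_all add: field_simps)

lemma dyadic_weights_from: "k \<le> N \<Longrightarrow> (\<Sum>i\<in>{k..<N}. (1/2::real) ^ Suc i) + (1/2) ^ N = (1/2) ^ k"
  using dyadic_weights[of k] dyadic_weights[of N] sum.atLeastLessThan_concat[of 0 k N "\<lambda>i. (1/2::real) ^ Suc i"]
  by (simp add: atLeast0LessThan)

lemma dyadic_weights_sum: "(\<Sum>i. (1/2::real) ^ Suc i) = 1"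
  using suminf_mult[of "\<lambda>i. (1/2::real) ^ i" "1/2"] suminf_geometric[of "1/2::real"] by simp

lemma dyadic_summable:
  fixes p :: "nat \<Rightarrow> 'a::banach"
  assumes "\<And>i. norm (p i) \<le> M"
  shows "summable (\<lambda>i. (1/2) ^ Suc i *\<^sub>R p i)"
proof (rule summable_comparison_test)
  show "\<exists>N. \<forall>i\<ge>N. norm ((1/2) ^ Suc i *\<^sub>R p i) \<le> M * (1/2) ^ Suc i"
    using assms by (auto simp: mult.commute intro: mult_left_mono)
  show "summable (\<lambda>i. M * (1/2::real) ^ Suc i)" by simp
qed

lemma dyadic_norm:
  fixes p :: "nat \<Rightarrow> 'a::banach"
  assumes "\<And>i. norm (p i) \<le> M"
  shows "norm (dyadic_avg p) \<le> M"
proof -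
  have "norm (dyadic_avg p) \<le> (\<Sum>i. M * (1/2) ^ Suc i)"
    unfolding dyadic_avg_def
    by (rule norm_suminf_le) (use assms in \<open>auto simp: mult.commute intro: mult_left_mono\<close>)
  also have "\<dots> = M" using suminf_mult[of "\<lambda>i. (1/2::real) ^ Suc i" M] dyadic_weights_sum by simp
  finally show ?thesis .
qed

lemma dyadic_split:
  fixes p :: "nat \<Rightarrow> 'a::banach"
  assumes "\<And>i. norm (p i) \<le> M"
  shows "dyadic_avg p = (\<Sum>i<N. (1/2) ^ Suc i *\<^sub>R p i) + (1/2) ^ N *\<^sub>R dyadic_avg (\<lambda>i. p (i + N))"
proof -
  have "summable (\<lambda>i. (1/2) ^ Suc i *\<^sub>R p (i + N))" by (rule dyadic_summable) (rule assms)
  then have "(1/2) ^ N *\<^sub>R dyadic_avg (\<lambda>i. p (i + N)) = (\<Sum>i. (1/2) ^ N *\<^sub>R ((1/2) ^ Suc i *\<^sub>R p (i + N)))"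
    unfolding dyadic_avg_def by (rule suminf_scaleR_right)
  then have tail: "(\<Sum>i. (1/2) ^ Suc (i + N) *\<^sub>R p (i + N)) = (1/2) ^ N *\<^sub>R dyadic_avg (\<lambda>i. p (i + N))"
    by (simp add: power_add mult.commute)
  have "dyadic_avg p = (\<Sum>i. (1/2) ^ Suc (i + N) *\<^sub>R p (i + N)) + (\<Sum>i<N. (1/2) ^ Suc i *\<^sub>R p i)"
    unfolding dyadic_avg_def by (rule suminf_split_initial_segment[OF dyadic_summable[where p = p, OF assms]])
  then show ?thesis unfolding tail by (simp only: add.commute)
qed

lemma dyadic_linear:
  fixes p :: "nat \<Rightarrow> 'a::banach"
  assumes "bounded_linear f" "\<And>i. norm (p i) \<le> M"
  shows "f (dyadic_avg p) = dyadic_avg (\<lambda>i. f (p i))"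
  unfolding dyadic_avg_def bounded_linear.suminf[OF assms(1) dyadic_summable[where p = p, OF assms(2)]]
  by (simp add: linear_scale[OF bounded_linear.linear[OF assms(1)]])

lemma dyadic_le:
  fixes p :: "nat \<Rightarrow> real"
  assumes "\<And>i. \<bar>p i\<bar> \<le> M" "\<And>i. p i \<le> \<theta>"
  shows "dyadic_avg p \<le> \<theta>"
proof -
  have "dyadic_avg p \<le> (\<Sum>i. (1/2) ^ Suc i * \<theta>)"
    unfolding dyadic_avg_def
  proof (rule suminf_le)
    show "(1/2) ^ Suc i *\<^sub>R p i \<le> (1/2) ^ Suc i * \<theta>" for i
      using assms(2)[of i] by (simp add: mult_left_mono)
    show "summable (\<lambda>i. (1/2) ^ Suc i *\<^sub>R p i)"
      by (rule dyadic_summable[of p M]) (simp add: assms(1))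
    show "summable (\<lambda>i. (1/2::real) ^ Suc i * \<theta>)" by (rule summable_mult2) simp
  qed
  also have "\<dots> = \<theta>" using suminf_mult2[of "\<lambda>i. (1/2::real) ^ Suc i" \<theta>] dyadic_weights_sum by simp
  finally show ?thesis .
qed

lemma dyadic_ge:
  fixes p :: "nat \<Rightarrow> real"
  assumes "\<And>i. \<bar>p i\<bar> \<le> M" "\<And>i. \<theta> \<le> p i"
  shows "\<theta> \<le> dyadic_avg p"
proof -
  have "dyadic_avg (\<lambda>i. - p i) \<le> - \<theta>"
    by (rule dyadic_le[where M = M]) (use assms in auto)
  moreover have "norm (p i) \<le> M" for i using assms(1) by simp
  then have "- dyadic_avg p = dyadic_avg (\<lambda>i. - p i)"
    by (rule dyadic_linear[OF bounded_linear_minus[OF bounded_linear_ident]])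
  ultimately show ?thesis by simp
qed

lemma dyadic_close:
  fixes p q :: "nat \<Rightarrow> 'a::banach"
  assumes "\<And>i. norm (p i) \<le> M" "\<And>i. norm (q i) \<le> M" "\<And>i. i < N \<Longrightarrow> p i = q i"
  shows "norm (dyadic_avg p - dyadic_avg q) \<le> 2 * M * (1/2) ^ N"
proof -
  have head: "(\<Sum>i<N. (1/2) ^ Suc i *\<^sub>R p i) = (\<Sum>i<N. (1/2) ^ Suc i *\<^sub>R q i)"
    using assms(3) by (intro sum.cong) auto
  have "dyadic_avg p - dyadic_avg q
      = (1/2) ^ N *\<^sub>R (dyadic_avg (\<lambda>i. p (i + N)) - dyadic_avg (\<lambda>i. q (i + N)))"
    unfolding dyadic_split[where p = p, OF assms(1), of N] dyadic_split[where p = q, OF assms(2), of N] head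
    by (simp add: scaleR_diff_right)
  moreover have "norm (dyadic_avg (\<lambda>i. p (i + N)) - dyadic_avg (\<lambda>i. q (i + N))) \<le> 2 * M"
  proof -
    have "norm (dyadic_avg (\<lambda>i. p (i + N))) \<le> M" "norm (dyadic_avg (\<lambda>i. q (i + N))) \<le> M"
      by (rule dyadic_norm, rule assms)+
    then show ?thesis using norm_triangle_ineq4[of "dyadic_avg (\<lambda>i. p (i + N))" "dyadic_avg (\<lambda>i. q (i + N))"]
      by linarith
  qed
  ultimately show ?thesis by (simp add: mult_left_mono mult.commute)
qed

lemma dyadic_avg_le_of_tails:
  fixes u :: "nat \<Rightarrow> real"
  assumes bound: "\<And>i. \<bar>u i\<bar> \<le> M" and null: "u \<longlonglongrightarrow> 0" and "\<delta> \<ge> 0"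
    and dominated: "\<And>k. u k \<le> dyadic_avg (\<lambda>i. u (i + k)) + \<delta> * (1/2) ^ k"
  shows "dyadic_avg u \<le> 2 * \<delta>"
proof -
  define tail where "tail k = dyadic_avg (\<lambda>i. u (i + k))" for k
  have bound': "norm (u (i + k)) \<le> M" for i k using bound by simp
  have step: "tail k = u k / 2 + tail (Suc k) / 2" for k
    using dyadic_split[where p = "\<lambda>i. u (i + k)", OF bound', of 1]
    by (simp add: tail_def add.commute add.left_commute)
  have decay: "tail k \<ge> dyadic_avg u - 2 * \<delta> * (1 - (1/2) ^ k)" for k
  proof (induction k)
    case 0 then show ?case by (simp add: tail_def)
  next
    case (Suc k)
    have "tail (Suc k) = 2 * tail k - u k" using step[of k] by simp
    then show ?case using Suc dominated[of k] by (simp add: tail_def algebra_simps)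
  qed
  show ?thesis
  proof (rule field_le_epsilon)
    fix \<theta> :: real assume "\<theta> > 0"
    then obtain K where K: "\<And>n. n \<ge> K \<Longrightarrow> \<bar>u n\<bar> < \<theta>"
      using LIMSEQ_D[OF null] by fastforce
    have "tail K \<le> \<theta>"
    proof (unfold tail_def, rule dyadic_le[where M = M])
      show "\<bar>u (i + K)\<bar> \<le> M" "u (i + K) \<le> \<theta>" for i
        using bound[of "i + K"] K[of "i + K"] by auto
    qed
    moreover have "2 * \<delta> * (1 - (1/2::real) ^ K) \<le> 2 * \<delta>"
      using \<open>\<delta> \<ge> 0\<close> by (simp add: mult_left_le)
    ultimately show "dyadic_avg u \<le> 2 * \<delta> + \<theta>" using decay[of K] by linarith
  qed
qed

section \<open>A Simons-type lemma\<close>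

lemma near_minimizer:
  fixes g :: "'a \<Rightarrow> real"
  assumes "S \<noteq> {}" "\<And>x. x \<in> S \<Longrightarrow> L \<le> g x" "\<eta> > 0"
  shows "\<exists>c\<in>S. \<forall>d\<in>S. g c \<le> g d + \<eta>"
proof -
  have bdd: "bdd_below (g ` S)" using assms(2) by (auto simp: bdd_below_def)
  obtain c where c: "c \<in> S" "g c < Inf (g ` S) + \<eta>"
    using cInf_lessD[of "g ` S" "Inf (g ` S) + \<eta>"] assms(1,3) by auto
  have "Inf (g ` S) \<le> g d" if "d \<in> S" for d
    using cInf_lower[OF _ bdd] that by blast
  then show ?thesis using c by force
qed

definition mix :: "(nat \<Rightarrow> nat \<Rightarrow> real) \<Rightarrow> nat \<Rightarrow> (nat \<Rightarrow> real) \<Rightarrow> nat \<Rightarrow> real" where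
  "mix cs k d = (\<lambda>n. (\<Sum>i<k. (1/2) ^ Suc i * cs i n) + (1/2) ^ k * d n)"

lemma mix_zero: "mix cs 0 d = d"
  unfolding mix_def by simp

lemma mix_conv_block:
  assumes "\<And>i. i < k \<Longrightarrow> cs i \<in> conv_block i" "d \<in> conv_block k"
  shows "mix cs k d \<in> conv_block 0"
proof -
  define t :: "nat \<Rightarrow> real" where "t i = (if i < k then (1/2) ^ Suc i else (1/2) ^ k)" for i
  define e where "e i = (if i < k then cs i else d)" for i
  have "(\<Sum>i<k. t i * e i n) = (\<Sum>i<k. (1/2) ^ Suc i * cs i n)" for n
    by (rule sum.cong) (simp_all add: t_def e_def)
  then have "mix cs k d = (\<lambda>n. \<Sum>i\<in>{..k}. t i * e i n)"
    unfolding mix_def lessThan_Suc_atMost[symmetric] by (simp add: t_def e_def)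
  also have "\<dots> \<in> conv_block 0"
  proof (rule conv_block_convex)
    show "e i \<in> conv_block 0" if "i \<in> {..k}" for i
      using assms conv_block_mono unfolding e_def by (cases "i < k") auto
    show "(\<Sum>i\<in>{..k}. t i) = 1"
      using dyadic_weights[of k] unfolding t_def lessThan_Suc_atMost[symmetric] by simp
  qed (simp_all add: t_def)
  finally show ?thesis .
qed

lemma mix_comb:
  fixes \<psi> :: "nat \<Rightarrow> real"
  assumes "\<And>i. i < k \<Longrightarrow> fin_supp (cs i)" "fin_supp d"
  shows "comb (mix cs k d) \<psi> = (\<Sum>i<k. (1/2) ^ Suc i * comb (cs i) \<psi>) + (1/2) ^ k * comb d \<psi>"
proof -
  have prefix: "fin_supp (\<lambda>n. \<Sum>i<k. (1/2) ^ Suc i * cs i n)"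
    using assms(1) by (intro fin_supp_sum fin_supp_scale) auto
  have "comb (mix cs k d) \<psi> = comb (\<lambda>n. \<Sum>i<k. (1/2) ^ Suc i * cs i n) \<psi> + comb (\<lambda>n. (1/2) ^ k * d n) \<psi>"
    unfolding mix_def by (rule comb_add[OF prefix fin_supp_scale[OF assms(2)]])
  also have "comb (\<lambda>n. \<Sum>i<k. (1/2) ^ Suc i * cs i n) \<psi> = (\<Sum>i<k. comb (\<lambda>n. (1/2) ^ Suc i * cs i n) \<psi>)"
    using assms(1) by (intro comb_sum fin_supp_scale) auto
  also have "\<dots> = (\<Sum>i<k. (1/2) ^ Suc i * comb (cs i) \<psi>)"
  proof (rule sum.cong)
    fix i assume "i \<in> {..<k}"
    then have supp: "fin_supp (cs i)" using assms(1) by simp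
    show "comb (\<lambda>n. (1/2) ^ Suc i * cs i n) \<psi> = (1/2) ^ Suc i * comb (cs i) \<psi>"
      unfolding comb_scale[OF supp] by simp
  qed simp
  also have "comb (\<lambda>n. (1/2) ^ k * d n) \<psi> = (1/2) ^ k * comb d \<psi>"
    unfolding comb_scale[OF assms(2)] by simp
  finally show ?thesis .
qed

lemma mix_later:
  assumes cs: "\<And>i. cs i \<in> conv_block i" and "k \<le> N"
  shows "\<exists>d\<in>conv_block k. mix cs N (cs N) = mix cs k d"
proof -
  define t :: "nat \<Rightarrow> real" where "t i = 2 ^ k * (if i = N then (1/2) ^ N else (1/2) ^ Suc i)" for i
  define d where "d n = (\<Sum>i\<in>{k..N}. t i * cs i n)" for n
  have split_N: "{k..N} = insert N {k..<N}" using \<open>k \<le> N\<close> by auto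
  have "d \<in> conv_block k"
    unfolding d_def[abs_def]
  proof (rule conv_block_convex)
    show "cs i \<in> conv_block k" if "i \<in> {k..N}" for i
      using conv_block_mono[OF cs] that by auto
    have "(\<Sum>i\<in>{k..N}. t i) = 2 ^ k * ((\<Sum>i\<in>{k..<N}. (1/2) ^ Suc i) + (1/2) ^ N)"
      unfolding split_N t_def by (simp add: sum_distrib_left distrib_left)
    also have "\<dots> = 1"
      unfolding dyadic_weights_from[OF \<open>k \<le> N\<close>] by (simp add: power_one_over)
    finally show "(\<Sum>i\<in>{k..N}. t i) = 1" .
  qed (simp_all add: t_def)
  moreover have "mix cs N (cs N) = mix cs k d"
  proof
    fix n
    have "(\<Sum>i<N. (1/2) ^ Suc i * cs i n) = (\<Sum>i<k. (1/2) ^ Suc i * cs i n) + (\<Sum>i\<in>{k..<N}. (1/2) ^ Suc i * cs i n)"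
      using sum.atLeastLessThan_concat[OF _ \<open>k \<le> N\<close>, of 0 "\<lambda>i. (1/2) ^ Suc i * cs i n"]
      by (simp add: atLeast0LessThan)
    moreover have "(1/2) ^ k * d n = (\<Sum>i\<in>{k..<N}. (1/2) ^ Suc i * cs i n) + (1/2) ^ N * cs N n"
    proof -
      have "d n = t N * cs N n + (\<Sum>i\<in>{k..<N}. t i * cs i n)"
        unfolding d_def split_N by simp
      also have "(\<Sum>i\<in>{k..<N}. t i * cs i n) = 2 ^ k * (\<Sum>i\<in>{k..<N}. (1/2) ^ Suc i * cs i n)"
        unfolding sum_distrib_left by (rule sum.cong) (auto simp: t_def)
      finally have "d n = 2 ^ k * ((1/2) ^ N * cs N n + (\<Sum>i\<in>{k..<N}. (1/2) ^ Suc i * cs i n))"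
        by (simp add: t_def distrib_left)
      moreover have "(1/2::real) ^ k * 2 ^ k = 1" by (simp add: power_one_over)
      ultimately show ?thesis by (simp add: mult.assoc[symmetric])
    qed
    ultimately show "mix cs N (cs N) n = mix cs k d n" unfolding mix_def by simp
  qed
  ultimately show ?thesis by blast
qed

lemma almost_greedy_blocks:
  fixes \<Psi> :: "(nat \<Rightarrow> real) \<Rightarrow> real"
  assumes bounded: "\<And>c. c \<in> conv_block 0 \<Longrightarrow> L \<le> \<Psi> c" and \<eta>: "\<And>k. \<eta> k > 0"
  obtains cs where "\<And>k. cs k \<in> conv_block k"
    and "\<And>k d. d \<in> conv_block k \<Longrightarrow> \<Psi> (mix cs k (cs k)) \<le> \<Psi> (mix cs k d) + \<eta> k"
proof -
  define good where "good k a c \<longleftrightarrow> c \<in> conv_block k \<and>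
      (\<forall>d\<in>conv_block k. \<Psi> (\<lambda>n. a n + (1/2) ^ k * c n) \<le> \<Psi> (\<lambda>n. a n + (1/2) ^ k * d n) + \<eta> k)"
    for k a c
  define acc where "acc = rec_nat (\<lambda>n. 0) (\<lambda>k a n. a n + (1/2) ^ Suc k * (SOME c. good k a c) n)"
  define cs where "cs k = (SOME c. good k (acc k) c)" for k
  have acc_sum: "acc k n = (\<Sum>i<k. (1/2) ^ Suc i * cs i n)" for k n
    by (induction k) (simp_all add: acc_def cs_def)
  have mix_acc: "mix cs k d = (\<lambda>n. acc k n + (1/2) ^ k * d n)" for k d
    unfolding mix_def acc_sum ..
  have cs_good: "good k (acc k) (cs k)" for k
  proof (induction k rule: less_induct)
    case (less k)
    have earlier: "cs i \<in> conv_block i" if "i < k" for i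
      using less[OF that] unfolding good_def by blast
    have "\<exists>c\<in>conv_block k. \<forall>d\<in>conv_block k. \<Psi> (mix cs k c) \<le> \<Psi> (mix cs k d) + \<eta> k"
    proof (rule near_minimizer)
      show "conv_block k \<noteq> {}" using conv_block_delta by blast
      show "L \<le> \<Psi> (mix cs k d)" if "d \<in> conv_block k" for d
        by (rule bounded[OF mix_conv_block[OF earlier that]])
    qed (rule \<eta>)
    then have "\<exists>c. good k (acc k) c" unfolding good_def mix_acc by blast
    then show ?case unfolding cs_def by (rule someI_ex)
  qed
  show ?thesis
  proof (rule that)
    show "cs k \<in> conv_block k" for k
      using cs_good[of k] unfolding good_def by blast
    show "\<Psi> (mix cs k (cs k)) \<le> \<Psi> (mix cs k d) + \<eta> k" if "d \<in> conv_block k" for k d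
      using cs_good[of k] that unfolding good_def mix_acc by blast
  qed
qed

definition sup_comb :: "(nat \<Rightarrow> real) set \<Rightarrow> (nat \<Rightarrow> real) \<Rightarrow> real" where
  "sup_comb T c = (SUP \<psi>\<in>T. comb c \<psi>)"

lemma sup_comb_upper:
  assumes "c \<in> conv_block k" "\<psi> \<in> T" "\<And>\<psi> n. \<psi> \<in> T \<Longrightarrow> \<bar>\<psi> n\<bar> \<le> M"
  shows "comb c \<psi> \<le> sup_comb T c"
proof -
  have "comb c \<xi> \<le> M" if "\<xi> \<in> T" for \<xi>
    using conv_block_comb_abs[where \<psi> = \<xi>, OF assms(1) assms(3)[OF that]] by simp
  then have "bdd_above ((\<lambda>\<xi>. comb c \<xi>) ` T)" by (rule bdd_aboveI2)
  then show ?thesis unfolding sup_comb_def by (rule cSUP_upper[OF assms(2)])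
qed

lemma sup_comb_least:
  "T \<noteq> {} \<Longrightarrow> (\<And>\<psi>. \<psi> \<in> T \<Longrightarrow> comb c \<psi> \<le> X) \<Longrightarrow> sup_comb T c \<le> X"
  unfolding sup_comb_def by (rule cSUP_least)

lemma sup_comb_mix_bound:
  assumes nonempty: "T \<noteq> {}" and bounded: "\<And>\<psi> n. \<psi> \<in> T \<Longrightarrow> \<bar>\<psi> n\<bar> \<le> M"
    and cs: "\<And>i. cs i \<in> conv_block i"
    and \<phi>_max: "\<And>\<psi>. \<psi> \<in> T \<Longrightarrow> dyadic_avg (\<lambda>i. comb (cs i) \<psi>) \<le> dyadic_avg (\<lambda>i. comb (cs i) \<phi>)"
  shows "sup_comb T (mix cs N (cs N)) \<le> dyadic_avg (\<lambda>i. comb (cs i) \<phi>) + 2 * ((1/2) ^ N * M)"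
proof (rule sup_comb_least[OF nonempty])
  fix \<psi> assume "\<psi> \<in> T"
  define p where "p i = comb (cs i) \<psi>" for i
  have p_bound: "norm (p i) \<le> M" for i
    unfolding p_def real_norm_def by (rule conv_block_comb_abs[where \<psi> = \<psi>, OF cs bounded[OF \<open>\<psi> \<in> T\<close>]])
  have "dyadic_avg p \<le> dyadic_avg (\<lambda>i. comb (cs i) \<phi>)"
    using \<phi>_max[OF \<open>\<psi> \<in> T\<close>] by (simp add: p_def[abs_def])
  then have "(\<Sum>i<N. (1/2) ^ Suc i *\<^sub>R p i) + (1/2) ^ N *\<^sub>R dyadic_avg (\<lambda>i. p (i + N))
      \<le> dyadic_avg (\<lambda>i. comb (cs i) \<phi>)"
    unfolding dyadic_split[where p = p, OF p_bound, of N, symmetric] .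
  moreover have "(1/2) ^ N * (- M) \<le> (1/2) ^ N * dyadic_avg (\<lambda>i. p (i + N))"
    using dyadic_norm[of "\<lambda>i. p (i + N)" M] p_bound by (intro mult_left_mono) (auto simp: abs_le_iff)
  moreover have "(1/2) ^ N * p N \<le> (1/2) ^ N * M"
    using p_bound[of N] by (intro mult_left_mono) auto
  moreover have "comb (mix cs N (cs N)) \<psi> = (\<Sum>i<N. (1/2) ^ Suc i * p i) + (1/2) ^ N * p N"
    unfolding p_def by (rule mix_comb) (use conv_blockD(1)[OF cs] in blast)+
  ultimately show "comb (mix cs N (cs N)) \<psi> \<le> dyadic_avg (\<lambda>i. comb (cs i) \<phi>) + 2 * ((1/2) ^ N * M)"
    unfolding real_scaleR_def by linarith
qed

theorem simons_lemma:
  fixes T :: "(nat \<Rightarrow> real) set" and M \<epsilon> :: real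
  assumes nonempty: "T \<noteq> {}"
    and bounded: "\<And>\<psi> n. \<psi> \<in> T \<Longrightarrow> \<bar>\<psi> n\<bar> \<le> M"
    and null: "\<And>\<psi>. \<psi> \<in> T \<Longrightarrow> \<psi> \<longlonglongrightarrow> 0"
    and attained: "\<And>cs. (\<And>i. cs i \<in> conv_block i) \<Longrightarrow>
      \<exists>\<phi>\<in>T. \<forall>\<psi>\<in>T. dyadic_avg (\<lambda>i. comb (cs i) \<psi>) \<le> dyadic_avg (\<lambda>i. comb (cs i) \<phi>)"
    and "\<epsilon> > 0"
  shows "\<exists>c\<in>conv_block 0. \<forall>\<psi>\<in>T. comb c \<psi> \<le> \<epsilon>"
proof -
  have sup_lower: "- M \<le> sup_comb T c" if "c \<in> conv_block 0" for c
  proof -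
    obtain \<psi> where "\<psi> \<in> T" using nonempty by blast
    have "- M \<le> comb c \<psi>" using conv_block_comb_abs[where \<psi> = \<psi>, OF that bounded[OF \<open>\<psi> \<in> T\<close>]] by simp
    also have "\<dots> \<le> sup_comb T c" using that \<open>\<psi> \<in> T\<close> bounded by (rule sup_comb_upper)
    finally show ?thesis .
  qed
  define \<delta> where "\<delta> = \<epsilon> / 3"
  have "\<delta> > 0" using \<open>\<epsilon> > 0\<close> by (simp add: \<delta>_def)
  then obtain cs where cs: "\<And>k. cs k \<in> conv_block k" and greedy: "\<And>k d. d \<in> conv_block k \<Longrightarrow>
      sup_comb T (mix cs k (cs k)) \<le> sup_comb T (mix cs k d) + \<delta> * (1/4) ^ k"
    using almost_greedy_blocks[of "- M" "sup_comb T" "\<lambda>k. \<delta> * (1/4) ^ k"] sup_lower by auto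
  obtain \<phi> where "\<phi> \<in> T"
    and \<phi>_max: "\<And>\<psi>. \<psi> \<in> T \<Longrightarrow> dyadic_avg (\<lambda>i. comb (cs i) \<psi>) \<le> dyadic_avg (\<lambda>i. comb (cs i) \<phi>)"
    using attained[OF cs] by blast
  define u where "u i = comb (cs i) \<phi>" for i
  have u_bound: "\<bar>u i\<bar> \<le> M" for i
    unfolding u_def by (rule conv_block_comb_abs[where \<psi> = \<phi>, OF cs bounded[OF \<open>\<phi> \<in> T\<close>]])
  have sup_bound: "sup_comb T (mix cs N (cs N)) \<le> dyadic_avg u + 2 * ((1/2) ^ N * M)" for N
    unfolding u_def[abs_def] using nonempty bounded cs \<phi>_max by (rule sup_comb_mix_bound)
  \<comment> \<open>Stage \<open>k\<close> of the greedy choice is almost as good as every later mixture.\<close>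
  have sup_close: "sup_comb T (mix cs k (cs k)) \<le> dyadic_avg u + \<delta> * (1/4) ^ k" for k
  proof (rule LIMSEQ_le_const)
    have "(\<lambda>N. 2 * ((1/2::real) ^ N * M)) \<longlonglongrightarrow> 0"
      by (intro tendsto_mult_right_zero tendsto_mult_left_zero LIMSEQ_power_zero) simp
    from tendsto_add[OF tendsto_const this]
    show "(\<lambda>N. dyadic_avg u + \<delta> * (1/4) ^ k + 2 * ((1/2) ^ N * M)) \<longlonglongrightarrow> dyadic_avg u + \<delta> * (1/4) ^ k"
      by simp
    have "sup_comb T (mix cs k (cs k)) \<le> dyadic_avg u + \<delta> * (1/4) ^ k + 2 * ((1/2) ^ N * M)"
      if "N \<ge> k" for N
      using mix_later[OF cs that] greedy sup_bound[of N] by fastforce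
    then show "\<exists>N0. \<forall>N\<ge>N0. sup_comb T (mix cs k (cs k)) \<le> dyadic_avg u + \<delta> * (1/4) ^ k + 2 * ((1/2) ^ N * M)"
      by blast
  qed
  \<comment> \<open>Testing stage \<open>k\<close> against the maximiser \<open>\<phi>\<close> bounds each \<open>u k\<close> by its tail average.\<close>
  have dominated: "u k \<le> dyadic_avg (\<lambda>i. u (i + k)) + \<delta> * (1/2) ^ k" for k
  proof -
    have "comb (mix cs k (cs k)) \<phi> = (\<Sum>i<k. (1/2) ^ Suc i * u i) + (1/2) ^ k * u k"
      unfolding u_def by (rule mix_comb) (use conv_blockD(1)[OF cs] in blast)+
    moreover have "comb (mix cs k (cs k)) \<phi> \<le> sup_comb T (mix cs k (cs k))"
      using mix_conv_block[OF cs cs] \<open>\<phi> \<in> T\<close> bounded by (rule sup_comb_upper)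
    ultimately have "(\<Sum>i<k. (1/2) ^ Suc i * u i) + (1/2) ^ k * u k \<le> sup_comb T (mix cs k (cs k))"
      by simp
    also have "\<dots> \<le> (\<Sum>i<k. (1/2) ^ Suc i * u i) + (1/2) ^ k * dyadic_avg (\<lambda>i. u (i + k)) + \<delta> * (1/4) ^ k"
      using sup_close[of k] dyadic_split[where p = u and M = M and N = k] u_bound by simp
    finally have "(1/2) ^ k * u k \<le> (1/2) ^ k * (dyadic_avg (\<lambda>i. u (i + k)) + \<delta> * (1/2) ^ k)"
      by (simp add: algebra_simps power_mult_distrib[symmetric])
    then show ?thesis by simp
  qed
  have "dyadic_avg u \<le> 2 * \<delta>"
    by (rule dyadic_avg_le_of_tails[OF u_bound _ _ dominated])
      (use conv_blocks_null[OF cs null[OF \<open>\<phi> \<in> T\<close>]] \<open>\<delta> > 0\<close> in \<open>simp_all add: u_def[abs_def]\<close>)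
  show ?thesis
  proof (intro bexI ballI)
    fix \<psi> assume "\<psi> \<in> T"
    have "comb (cs 0) \<psi> \<le> sup_comb T (cs 0)" using cs \<open>\<psi> \<in> T\<close> bounded by (rule sup_comb_upper)
    also have "\<dots> \<le> dyadic_avg u + \<delta>" using sup_close[of 0] by (simp add: mix_zero)
    also have "\<dots> \<le> \<epsilon>" using \<open>dyadic_avg u \<le> 2 * \<delta>\<close> by (simp add: \<delta>_def)
    finally show "comb (cs 0) \<psi> \<le> \<epsilon>" .
  qed (rule cs)
qed

section \<open>Attainment of maxima\<close>

definition extendable :: "(nat set \<Rightarrow> real) \<Rightarrow> nat \<Rightarrow> nat set \<Rightarrow> bool" where
  "extendable Z K P \<longleftrightarrow> (\<forall>\<eta>>0. \<exists>A. (\<forall>n<K. n \<in> A \<longleftrightarrow> n \<in> P) \<and> Z A > (SUP B. Z B) - \<eta>)"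

lemma extendable_0:
  assumes "bdd_above (range Z)" shows "extendable Z 0 P"
  unfolding extendable_def
proof (intro allI impI)
  fix \<eta> :: real assume "\<eta> > 0"
  then have "(SUP B. Z B) - \<eta> < (SUP B. Z B)" by simp
  then obtain A where "(SUP B. Z B) - \<eta> < Z A"
    using less_cSUP_iff[OF _ assms] by blast
  then show "\<exists>A. (\<forall>n<0. n \<in> A \<longleftrightarrow> n \<in> P) \<and> Z A > (SUP B. Z B) - \<eta>" by blast
qed

lemma extendable_Suc:
  assumes "extendable Z K P"
  shows "extendable Z (Suc K) (insert K P) \<or> extendable Z (Suc K) (P - {K})"
proof (rule ccontr)
  assume "\<not> ?thesis"
  then have "\<not> extendable Z (Suc K) (insert K P)" "\<not> extendable Z (Suc K) (P - {K})" by auto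
  then obtain \<eta>1 \<eta>2 where "\<eta>1 > 0" "\<eta>2 > 0"
    and with_K: "\<forall>A. (\<forall>n<Suc K. n \<in> A \<longleftrightarrow> n \<in> insert K P) \<longrightarrow> \<not> Z A > (SUP B. Z B) - \<eta>1"
    and without_K: "\<forall>A. (\<forall>n<Suc K. n \<in> A \<longleftrightarrow> n \<in> P - {K}) \<longrightarrow> \<not> Z A > (SUP B. Z B) - \<eta>2"
    unfolding extendable_def by (metis (no_types))
  have "min \<eta>1 \<eta>2 > 0" using \<open>\<eta>1 > 0\<close> \<open>\<eta>2 > 0\<close> by simp
  then obtain A where A: "\<forall>n<K. n \<in> A \<longleftrightarrow> n \<in> P" "Z A > (SUP B. Z B) - min \<eta>1 \<eta>2"
    using assms unfolding extendable_def by blast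
  show False
  proof (cases "K \<in> A")
    case True
    then have "\<forall>n<Suc K. n \<in> A \<longleftrightarrow> n \<in> insert K P" using A(1) by (auto simp: less_Suc_eq)
    then have "\<not> Z A > (SUP B. Z B) - \<eta>1" using with_K by blast
    then show False using A(2) by linarith
  next
    case False
    then have "\<forall>n<Suc K. n \<in> A \<longleftrightarrow> n \<in> P - {K}" using A(1) by (auto simp: less_Suc_eq)
    then have "\<not> Z A > (SUP B. Z B) - \<eta>2" using without_K by blast
    then show False using A(2) by linarith
  qed
qed

text \<open>A bounded function on sets of naturals that is uniformly continuous for agreement on
  initial segments attains its supremum (compactness of the Cantor space, by bisection).\<close>
lemma set_function_attains_max:
  fixes Z :: "nat set \<Rightarrow> real"
  assumes bounded: "\<And>A. Z A \<le> B"
    and continuous: "\<And>\<eta>. \<eta> > 0 \<Longrightarrow> \<exists>K. \<forall>A A'. (\<forall>n<K. n \<in> A \<longleftrightarrow> n \<in> A') \<longrightarrow> \<bar>Z A - Z A'\<bar> \<le> \<eta>"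
  shows "\<exists>A0. \<forall>A. Z A \<le> Z A0"
proof -
  have bdd: "bdd_above (range Z)" using bounded by (auto simp: bdd_above_def)
  define Ps where "Ps = rec_nat {} (\<lambda>K P. if extendable Z (Suc K) (insert K P) then insert K P else P - {K})"
  have Ps_Suc: "Ps (Suc K) = (if extendable Z (Suc K) (insert K (Ps K)) then insert K (Ps K) else Ps K - {K})" for K
    by (simp add: Ps_def)
  have Ps_extendable: "extendable Z K (Ps K)" for K
  proof (induction K)
    case 0 then show ?case by (rule extendable_0[OF bdd])
  next
    case (Suc K) then show ?case using extendable_Suc[OF Suc] unfolding Ps_Suc by auto
  qed
  have stable: "n \<in> Ps K \<longleftrightarrow> n \<in> Ps (Suc n)" if "n < K" for n K
    using that
  proof (induction K)
    case (Suc K)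
    show ?case
    proof (cases "n < K")
      case True then show ?thesis using Suc.IH by (auto simp: Ps_Suc[of K])
    next
      case False then show ?thesis using Suc.prems by (simp add: less_Suc_eq)
    qed
  qed simp
  define A0 where "A0 = {n. n \<in> Ps (Suc n)}"
  have "(SUP A. Z A) \<le> Z A0"
  proof (rule field_le_epsilon)
    fix e :: real assume "e > 0"
    then obtain K where K: "\<And>A A'. \<forall>n<K. n \<in> A \<longleftrightarrow> n \<in> A' \<Longrightarrow> \<bar>Z A - Z A'\<bar> \<le> e / 2"
      using continuous[of "e / 2"] by auto
    obtain A where A: "\<forall>n<K. n \<in> A \<longleftrightarrow> n \<in> Ps K" "Z A > (SUP B. Z B) - e / 2"
      using Ps_extendable[of K] \<open>e > 0\<close> unfolding extendable_def by (meson half_gt_zero)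
    have "\<forall>n<K. n \<in> A \<longleftrightarrow> n \<in> A0" using A(1) stable unfolding A0_def by blast
    then have "\<bar>Z A - Z A0\<bar> \<le> e / 2" by (rule K)
    then show "(SUP A. Z A) \<le> Z A0 + e" using A(2) by linarith
  qed
  then show ?thesis using cSUP_upper[OF UNIV_I bdd] order_trans by blast
qed

lemma nonneg_null_attains_max:
  fixes f :: "nat \<Rightarrow> real"
  assumes "\<And>n. 0 \<le> f n" "f \<longlonglongrightarrow> 0"
  shows "\<exists>m. \<forall>n. f n \<le> f m"
proof (cases "\<exists>n1. f n1 > 0")
  case False
  then show ?thesis using assms(1) by (metis antisym not_less)
next
  case True
  then obtain n1 where "f n1 > 0" by blast
  then obtain K where K: "\<And>n. n \<ge> K \<Longrightarrow> \<bar>f n\<bar> < f n1"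
    using LIMSEQ_D[OF assms(2)] by fastforce
  have "Max (f ` {..max K n1}) \<in> f ` {..max K n1}" by (rule Max_in) auto
  then obtain m where m: "m \<in> {..max K n1}" "Max (f ` {..max K n1}) = f m" by blast
  have "f n \<le> f m" for n
  proof (cases "n \<le> max K n1")
    case True then show ?thesis unfolding m(2)[symmetric] by (intro Max_ge) auto
  next
    case False
    then have "\<bar>f n\<bar> < f n1" using K[of n] by simp
    then have "f n < f n1" by simp
    also have "f n1 \<le> f m" unfolding m(2)[symmetric] by (intro Max_ge) auto
    finally show ?thesis by simp
  qed
  then show ?thesis by blast
qed

section \<open>The two test families for a weakly null sequence\<close>

definition block_vec :: "(nat \<Rightarrow> 'a::real_normed_vector) \<Rightarrow> (nat \<Rightarrow> real) \<Rightarrow> nat set \<Rightarrow> 'a" where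
  "block_vec v c A = comb c (\<lambda>n. if n \<in> A then v n else 0)"

lemma block_vec_norm:
  assumes "c \<in> conv_block k" "\<And>n. norm (v n) \<le> M"
  shows "norm (block_vec v c A) \<le> M"
  unfolding block_vec_def
proof (rule conv_block_norm[OF assms(1)])
  have "0 \<le> M" using norm_ge_zero assms(2) by (rule order_trans)
  then show "norm (if n \<in> A then v n else 0) \<le> M" for n
    using assms(2)[of n] by simp
qed

lemma block_vec_functional:
  fixes v :: "nat \<Rightarrow> 'a::real_normed_vector" and f :: "'a \<Rightarrow> 'b::real_normed_vector"
  assumes "linear f" "fin_supp c"
  shows "f (block_vec v c A) = comb c (\<lambda>n. if n \<in> A then f (v n) else 0)"
proof -
  have "(\<lambda>n. f (if n \<in> A then v n else 0)) = (\<lambda>n. if n \<in> A then f (v n) else 0)"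
    using assms(1) by (simp add: fun_eq_iff linear_0)
  then show ?thesis unfolding block_vec_def comb_linear[OF assms] by simp
qed

lemma block_vec_eq_sum:
  assumes "\<forall>n\<ge>N. c n = 0"
  shows "block_vec v c A = (\<Sum>n\<in>{..<N} \<inter> A. c n *\<^sub>R v n)"
proof -
  have "block_vec v c A = (\<Sum>n<N. if n \<in> A then c n *\<^sub>R v n else 0)"
    unfolding block_vec_def comb_eq_sum[OF assms] by (rule sum.cong) auto
  also have "\<dots> = (\<Sum>n\<in>{..<N} \<inter> A. c n *\<^sub>R v n)"
    by (rule sum.inter_restrict[symmetric]) simp
  finally show ?thesis .
qed

lemma block_vec_agree:
  assumes "\<forall>n\<ge>N. c n = 0" "\<forall>n<N. n \<in> A \<longleftrightarrow> n \<in> B"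
  shows "block_vec v c A = block_vec v c B"
  unfolding block_vec_def comb_eq_sum[OF assms(1)] using assms(2) by (intro sum.cong) auto

lemma block_avg_continuous:
  fixes v :: "nat \<Rightarrow> 'a::banach"
  assumes cs: "\<And>i. cs i \<in> conv_block i" and bound: "\<And>n. norm (v n) \<le> M" and "\<eta> > 0"
  shows "\<exists>K. \<forall>A B. (\<forall>n<K. n \<in> A \<longleftrightarrow> n \<in> B) \<longrightarrow>
    \<bar>norm (dyadic_avg (\<lambda>i. block_vec v (cs i) A)) - norm (dyadic_avg (\<lambda>i. block_vec v (cs i) B))\<bar> \<le> \<eta>"
proof -
  have "(\<lambda>I. 2 * M * (1/2::real) ^ I) \<longlonglongrightarrow> 0"
    by (intro tendsto_mult_right_zero LIMSEQ_power_zero) simp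
  from LIMSEQ_D[OF this \<open>\<eta> > 0\<close>] obtain I where "norm (2 * M * (1/2::real) ^ I - 0) < \<eta>"
    by blast
  then have I: "2 * M * (1/2::real) ^ I < \<eta>" by simp
  obtain K where K: "\<forall>i<I. \<forall>n\<ge>K. cs i n = 0"
    using fin_supp_uniform[of I cs] conv_blockD(1)[OF cs] by blast
  have "\<bar>norm (dyadic_avg (\<lambda>i. block_vec v (cs i) A)) - norm (dyadic_avg (\<lambda>i. block_vec v (cs i) B))\<bar> \<le> \<eta>"
    if agree: "\<forall>n<K. n \<in> A \<longleftrightarrow> n \<in> B" for A B
  proof -
    have "norm (dyadic_avg (\<lambda>i. block_vec v (cs i) A) - dyadic_avg (\<lambda>i. block_vec v (cs i) B))
        \<le> 2 * M * (1/2) ^ I"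
    proof (rule dyadic_close)
      show "norm (block_vec v (cs i) A) \<le> M" "norm (block_vec v (cs i) B) \<le> M" for i
        by (rule block_vec_norm[OF cs bound])+
      show "block_vec v (cs i) A = block_vec v (cs i) B" if "i < I" for i
        using K that agree by (intro block_vec_agree) auto
    qed
    then show ?thesis
      using I norm_triangle_ineq3[of "dyadic_avg (\<lambda>i. block_vec v (cs i) A)"
          "dyadic_avg (\<lambda>i. block_vec v (cs i) B)"] by linarith
  qed
  then show ?thesis by blast
qed

definition norming_tests :: "(nat \<Rightarrow> 'a::real_normed_vector) \<Rightarrow> (nat \<Rightarrow> real) set" where
  "norming_tests v =
    {(\<lambda>n. if n \<in> A then f (v n) else 0) | A f. bounded_linear f \<and> (\<forall>x. \<bar>f x\<bar> \<le> norm x)}"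

definition coordinate_tests :: "(nat \<Rightarrow> real) set" where
  "coordinate_tests = range (\<lambda>m n. if n = m then 1 else 0)"

text \<open>The maximum over the norming tests is attained: pick a set \<open>A\<^sub>0\<close> maximising the norm of the
  averaged partial sums, and a functional norming that vector.\<close>
lemma norming_tests_attained:
  fixes v :: "nat \<Rightarrow> 'a::banach"
  assumes cs: "\<And>i. cs i \<in> conv_block i" and bound: "\<And>n. norm (v n) \<le> M"
  shows "\<exists>\<phi>\<in>norming_tests v. \<forall>\<psi>\<in>norming_tests v.
           dyadic_avg (\<lambda>i. comb (cs i) \<psi>) \<le> dyadic_avg (\<lambda>i. comb (cs i) \<phi>)"
proof -
  define w where "w A = dyadic_avg (\<lambda>i. block_vec v (cs i) A)" for A
  have test_value: "dyadic_avg (\<lambda>i. comb (cs i) (\<lambda>n. if n \<in> A then f (v n) else 0)) = f (w A)"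
    if "bounded_linear f" for f :: "'a \<Rightarrow> real" and A
  proof -
    have "f (w A) = dyadic_avg (\<lambda>i. f (block_vec v (cs i) A))"
      unfolding w_def by (rule dyadic_linear[OF that block_vec_norm[OF cs bound]])
    also have "\<dots> = dyadic_avg (\<lambda>i. comb (cs i) (\<lambda>n. if n \<in> A then f (v n) else 0))"
      using block_vec_functional[OF bounded_linear.linear[OF that] conv_blockD(1)[OF cs]] by simp
    finally show ?thesis by simp
  qed
  obtain A0 where A0: "\<And>A. norm (w A) \<le> norm (w A0)"
  proof -
    have "\<exists>A0. \<forall>A. norm (w A) \<le> norm (w A0)"
    proof (rule set_function_attains_max)
      show "norm (w A) \<le> M" for A
        unfolding w_def by (rule dyadic_norm) (rule block_vec_norm[OF cs bound])
    qed (unfold w_def, rule block_avg_continuous[OF cs bound])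
    then show ?thesis using that by blast
  qed
  obtain f0 where f0: "bounded_linear f0" "\<And>x. \<bar>f0 x\<bar> \<le> norm x" "f0 (w A0) = norm (w A0)"
    using norming_functional by blast
  show ?thesis
  proof (intro bexI ballI)
    fix \<psi> assume "\<psi> \<in> norming_tests v"
    then obtain A f where f: "bounded_linear f" "\<And>x. \<bar>f x\<bar> \<le> norm x"
      and \<psi>: "\<psi> = (\<lambda>n. if n \<in> A then f (v n) else 0)"
      unfolding norming_tests_def by blast
    have "f (w A) \<le> norm (w A0)" using f(2)[of "w A"] A0[of A] by linarith
    then show "dyadic_avg (\<lambda>i. comb (cs i) \<psi>)
        \<le> dyadic_avg (\<lambda>i. comb (cs i) (\<lambda>n. if n \<in> A0 then f0 (v n) else 0))"
      unfolding \<psi> test_value[OF f(1)] test_value[OF f0(1)] f0(3) .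
  next
    show "(\<lambda>n. if n \<in> A0 then f0 (v n) else 0) \<in> norming_tests v"
      unfolding norming_tests_def using f0(1,2) by blast
  qed
qed

text \<open>The averaged weight of coordinate \<open>n\<close> tends to zero, since only late blocks can charge
  late coordinates.\<close>
lemma coordinate_weights_null:
  assumes cs: "\<And>i. cs i \<in> conv_block i"
  shows "(\<lambda>n. dyadic_avg (\<lambda>i. cs i n)) \<longlonglongrightarrow> 0"
proof (rule LIMSEQ_I)
  fix \<theta> :: real assume "\<theta> > 0"
  have "(\<lambda>I. 2 * (1/2::real) ^ I) \<longlonglongrightarrow> 0"
    by (intro tendsto_mult_right_zero LIMSEQ_power_zero) simp
  from LIMSEQ_D[OF this \<open>\<theta> > 0\<close>] obtain I where "norm (2 * (1/2::real) ^ I - 0) < \<theta>" by blast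
  then have I: "2 * (1/2::real) ^ I < \<theta>" by simp
  obtain K where K: "\<forall>i<I. \<forall>n\<ge>K. cs i n = 0"
    using fin_supp_uniform[of I cs] conv_blockD(1)[OF cs] by blast
  have entries: "norm (cs i n) \<le> 1" for i n
    using conv_block_le1[OF cs] conv_blockD(2)[OF cs] by simp
  have "norm (dyadic_avg (\<lambda>i. cs i n) - 0) < \<theta>" if "n \<ge> K" for n
  proof -
    have "norm (dyadic_avg (\<lambda>i. cs i n) - dyadic_avg (\<lambda>_. 0)) \<le> 2 * 1 * (1/2) ^ I"
      by (rule dyadic_close) (use entries K that in auto)
    then show ?thesis using I by (simp add: dyadic_avg_def)
  qed
  then show "\<exists>K. \<forall>n\<ge>K. norm (dyadic_avg (\<lambda>i. cs i n) - 0) < \<theta>" by blast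
qed

text \<open>On the coordinate tests the dyadic average is the averaged weight of one coordinate.\<close>
lemma coordinate_tests_attained:
  assumes cs: "\<And>i. cs i \<in> conv_block i"
  shows "\<exists>\<phi>\<in>coordinate_tests. \<forall>\<psi>\<in>coordinate_tests.
           dyadic_avg (\<lambda>i. comb (cs i) \<psi>) \<le> dyadic_avg (\<lambda>i. comb (cs i) \<phi>)"
proof -
  have "\<exists>m. \<forall>n. dyadic_avg (\<lambda>i. cs i n) \<le> dyadic_avg (\<lambda>i. cs i m)"
  proof (rule nonneg_null_attains_max)
    show "0 \<le> dyadic_avg (\<lambda>i. cs i n)" for n
      by (rule dyadic_ge[where M = 1]) (use conv_block_le1[OF cs] conv_blockD(2)[OF cs] in auto)
  qed (rule coordinate_weights_null[OF cs])
  then show ?thesis unfolding coordinate_tests_def by (auto simp: comb_delta)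
qed

lemma max_on_Un:
  assumes "\<exists>x\<in>A. \<forall>y\<in>A. g y \<le> g x" "\<exists>x\<in>B. \<forall>y\<in>B. g y \<le> (g x :: real)"
  shows "\<exists>x\<in>A \<union> B. \<forall>y\<in>A \<union> B. g y \<le> g x"
  using assms by (metis UnCI UnE linear order_trans)

lemma test_sequences_null:
  assumes wn: "weakly_null v" and "\<psi> \<in> norming_tests v \<union> coordinate_tests"
  shows "\<psi> \<longlonglongrightarrow> 0"
  using assms(2)
proof
  assume "\<psi> \<in> norming_tests v"
  then obtain A f where f: "bounded_linear f" and \<psi>: "\<psi> = (\<lambda>n. if n \<in> A then f (v n) else 0)"
    unfolding norming_tests_def by blast
  show "\<psi> \<longlonglongrightarrow> 0" unfolding \<psi>
    by (rule Lim_null_comparison[OF _ tendsto_rabs_zero[OF weakly_nullD[OF wn f]]]) simp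
next
  assume "\<psi> \<in> coordinate_tests"
  then obtain m where \<psi>: "\<psi> = (\<lambda>n. if n = m then 1 else 0)" unfolding coordinate_tests_def by blast
  have "eventually (\<lambda>n. \<psi> n = 0) sequentially"
    unfolding \<psi> eventually_sequentially by (intro exI[of _ "Suc m"]) auto
  then show "\<psi> \<longlonglongrightarrow> 0" by (rule tendsto_eventually)
qed

lemma weakly_null_small_block:
  fixes v :: "nat \<Rightarrow> 'a::banach"
  assumes wn: "weakly_null v" and "\<epsilon> > 0"
  obtains c where "c \<in> conv_block 0" "\<And>n. c n \<le> \<epsilon>" "\<And>A. norm (block_vec v c A) \<le> \<epsilon>"
proof -
  obtain M0 where M0: "\<And>n. norm (v n) \<le> M0"
    using weakly_null_bounded[OF wn] unfolding bounded_iff by blast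
  define M where "M = max M0 1"
  have bound: "norm (v n) \<le> M" for n using M0[of n] by (simp add: M_def)
  define T where "T = norming_tests v \<union> coordinate_tests"
  have "\<exists>c\<in>conv_block 0. \<forall>\<psi>\<in>T. comb c \<psi> \<le> \<epsilon>"
  proof (rule simons_lemma[where M = M])
    show "T \<noteq> {}" unfolding T_def coordinate_tests_def by blast
    show "\<bar>\<psi> n\<bar> \<le> M" if "\<psi> \<in> T" for \<psi> n
      using that bound[of n] unfolding T_def norming_tests_def coordinate_tests_def M_def
      by (fastforce intro: order_trans)
    show "\<psi> \<longlonglongrightarrow> 0" if "\<psi> \<in> T" for \<psi>
      using that unfolding T_def by (rule test_sequences_null[OF wn])
    show "\<exists>\<phi>\<in>T. \<forall>\<psi>\<in>T. dyadic_avg (\<lambda>i. comb (cs i) \<psi>) \<le> dyadic_avg (\<lambda>i. comb (cs i) \<phi>)"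
      if "\<And>i. cs i \<in> conv_block i" for cs
      unfolding T_def
      by (rule max_on_Un[OF norming_tests_attained[OF that bound] coordinate_tests_attained[OF that]])
  qed fact
  then obtain c where c: "c \<in> conv_block 0" and small: "\<And>\<psi>. \<psi> \<in> T \<Longrightarrow> comb c \<psi> \<le> \<epsilon>"
    by blast
  show ?thesis
  proof (rule that[OF c])
    fix n
    have "(\<lambda>m. if m = n then 1 else 0) \<in> T" unfolding T_def coordinate_tests_def by blast
    then show "c n \<le> \<epsilon>" using small comb_delta by metis
  next
    fix A
    obtain f where f: "bounded_linear f" "\<And>x. \<bar>f x\<bar> \<le> norm x"
      "f (block_vec v c A) = norm (block_vec v c A)"
      using norming_functional by blast
    have "(\<lambda>n. if n \<in> A then f (v n) else 0) \<in> T"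
      unfolding T_def norming_tests_def using f(1,2) by blast
    then have "comb c (\<lambda>n. if n \<in> A then f (v n) else 0) \<le> \<epsilon>" by (rule small)
    then show "norm (block_vec v c A) \<le> \<epsilon>"
      using block_vec_functional[OF bounded_linear.linear[OF f(1)] conv_blockD(1)[OF c]] f(3) by simp
  qed
qed

lemma conv_block_enumeration:
  assumes c: "c \<in> conv_block 0"
  obtains j :: nat and k :: "nat \<Rightarrow> nat"
  where "strict_mono_on {0..j} k" "(\<Sum>i=0..j. c (k i)) = 1"
    "\<And>F. F \<subseteq> {0..j} \<Longrightarrow> (\<Sum>i\<in>F. c (k i) *\<^sub>R v (k i)) = block_vec v c (k ` F)"
proof -
  obtain N where N: "\<forall>n\<ge>N. c n = 0" using conv_blockD(1)[OF c] unfolding fin_supp_def by blast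
  define S where "S = {n. c n \<noteq> 0}"
  have S_below: "S \<subseteq> {..<N}" using N by (auto simp: S_def not_less[symmetric])
  then have "finite S" by (rule finite_subset) simp
  have "(\<Sum>n\<in>S. c n) = (\<Sum>n<N. c n)"
    using S_below by (intro sum.mono_neutral_left) (auto simp: S_def)
  also have "\<dots> = 1" using conv_blockD(4)[OF c] unfolding comb_eq_sum[OF N] by simp
  finally have sum_S: "(\<Sum>n\<in>S. c n) = 1" .
  then have "S \<noteq> {}" by auto
  define xs where "xs = sorted_list_of_set S"
  have xs: "distinct xs" "sorted_wrt (<) xs" "set xs = S" "xs \<noteq> []"
    using \<open>finite S\<close> \<open>S \<noteq> {}\<close> by (simp_all add: xs_def)
  define j where "j = length xs - 1"
  have "length xs > 0" using xs(4) by simp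
  then have "Suc j = length xs" unfolding j_def by arith
  then have indices: "{0..j} = {..<length xs}" by (auto simp: atLeast0AtMost lessThan_Suc_atMost[symmetric])
  define k where "k i = xs ! i" for i
  have bij: "bij_betw k {0..j} S"
    unfolding indices k_def by (rule bij_betw_nth[OF xs(1) refl xs(3)[symmetric]])
  show ?thesis
  proof (rule that)
    show "strict_mono_on {0..j} k"
      unfolding strict_mono_on_def indices k_def using sorted_wrt_nth_less[OF xs(2)] by auto
    show "(\<Sum>i=0..j. c (k i)) = 1"
      using sum.reindex_bij_betw[OF bij, of c] sum_S by simp
    show "(\<Sum>i\<in>F. c (k i) *\<^sub>R v (k i)) = block_vec v c (k ` F)" if "F \<subseteq> {0..j}" for F
    proof -
      have "inj_on k F" using bij that by (auto simp: bij_betw_def intro: inj_on_subset)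
      moreover have "k ` F \<subseteq> {..<N}" using bij that S_below by (auto simp: bij_betw_def)
      ultimately show ?thesis
        unfolding block_vec_eq_sum[OF N] by (simp add: sum.reindex Int_absorb1)
    qed
  qed
qed

theorem lemma19:
  fixes v :: "nat \<Rightarrow> 'a::banach"
  assumes "weakly_null v"
    and "(\<epsilon>::real) > 0"
  shows "\<exists>(j::nat) (k::nat \<Rightarrow> nat) (lam::nat \<Rightarrow> real).
           strict_mono_on {0..j} k \<and>
           (\<forall>i\<in>{0..j}. lam i \<ge> 0) \<and>
           (\<Sum>i=0..j. lam i) = 1 \<and>
           (\<forall>i\<in>{0..j}. lam i \<le> \<epsilon>) \<and>
           (\<forall>F. F \<subseteq> {0..j} \<longrightarrow> norm (\<Sum>i\<in>F. lam i *\<^sub>R v (k i)) \<le> \<epsilon>)"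
proof -
  obtain c where c: "c \<in> conv_block 0" and entries: "\<And>n. c n \<le> \<epsilon>"
    and blocks: "\<And>A. norm (block_vec v c A) \<le> \<epsilon>"
    using weakly_null_small_block[OF assms] by blast
  obtain j :: nat and k :: "nat \<Rightarrow> nat" where "strict_mono_on {0..j} k" "(\<Sum>i=0..j. c (k i)) = 1"
    and partial: "\<And>F. F \<subseteq> {0..j} \<Longrightarrow> (\<Sum>i\<in>F. c (k i) *\<^sub>R v (k i)) = block_vec v c (k ` F)"
    using conv_block_enumeration[OF c] by blast
  moreover have "\<forall>F. F \<subseteq> {0..j} \<longrightarrow> norm (\<Sum>i\<in>F. c (k i) *\<^sub>R v (k i)) \<le> \<epsilon>"
    using partial blocks by simp
  ultimately show ?thesis
    using conv_blockD(2)[OF c] entries by (intro exI[of _ j] exI[of _ k] exI[of _ "\<lambda>i. c (k i)"]) auto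
qed

end
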